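(* Let $s$ and $n$ be positive integers, let $f:\mathbb{N}\to\mathbb{C}$ be an arithmetical function, and let $f'(k)=\sum_{d\mid k}\mu(d)f(k/d)$. If $$\sum_{q=1}^{\infty}\sum_{m=1}^{\infty}\frac{|f'(mq)|}{(mq)^s}\,\bigl|c_q^{(s)}(n^s)\bigr|<\infty,$$ then $$\sum_{k=1}^{\infty}2^{\omega(k)}\frac{|f'(k)|}{k^s}<\infty .$$
   Context: For positive integers $a,b,s$, the generalized gcd $(a,b)_s$ is the largest $d^s$ ($d\in\mathbb{N}$) such that $d^s\mid a$ and $d^s\mid b$. The Cohen–Ramanujan sum is defined for positive integers $q,n,s$ by $$c_q^{(s)}(n)=\sum_{\substack{h=1\\ (h,q^s)_s=1}}^{q^s} e^{2\pi i n h/q^s}.$$ $\mu$ is the Möbius function and $\omega(k)$ is the number of distinct prime divisors of $k$. *)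

theory Defs
  imports "HOL-Analysis.Analysis" "HOL-Computational_Algebra.Computational_Algebra"
begin

definition gen_gcd :: "nat \<Rightarrow> nat \<Rightarrow> nat \<Rightarrow> nat" where
  "gen_gcd s a b = (GREATEST e. \<exists>d. e = d ^ s \<and> d ^ s dvd a \<and> d ^ s dvd b)"

definition cohen_ramanujan :: "nat \<Rightarrow> nat \<Rightarrow> nat \<Rightarrow> complex" where
  "cohen_ramanujan s q n =
     (\<Sum>h\<in>{h\<in>{1..q ^ s}. gen_gcd s h (q ^ s) = 1}.
        exp (2 * of_real pi * \<i> * of_nat n * of_nat h / of_nat (q ^ s)))"

definition moebius :: "nat \<Rightarrow> int" where
  "moebius k = (if squarefree k then (-1) ^ card (prime_factors k) else 0)"

definition omega :: "nat \<Rightarrow> nat" where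
  "omega k = card (prime_factors k)"

definition fprime :: "(nat \<Rightarrow> complex) \<Rightarrow> nat \<Rightarrow> complex" where
  "fprime f k = (\<Sum>d | d dvd k. of_int (moebius d) * f (k div d))"

end

theory Submission
  imports Defs
begin

text \<open>
  For squarefree \<open>q\<close> coprime to \<open>n\<close> the Cohen--Ramanujan sum \<open>c\<^sub>q\<^sup>(\<^sup>s\<^sup>)(n\<^sup>s)\<close> equals \<open>\<mu>(q)\<close>:
  the condition \<open>(h, q\<^sup>s)\<^sub>s = 1\<close> sieves out the multiples of the pairwise coprime
  numbers \<open>p\<^sup>s\<close>, \<open>p\<close> a prime factor of \<open>q\<close>, and removing one of them replaces the sum by
  a difference of two sums of the same shape; a complete sum of \<open>N\<close>-th roots of unity
  vanishes unless \<open>N\<close> divides \<open>n\<^sup>s\<close>, and \<open>p\<^sup>s\<close> never does, so only the modulus \<open>1\<close> survives.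
  Hence the hypothesis, restricted to these \<open>q\<close> and rewritten with \<open>k = m q\<close>, says that
  \<open>\<Sum>\<^sub>k |f'(k)| k\<^sup>-\<^sup>s \<cdot> #{q | k. q squarefree, coprime to n}\<close> converges. The products of
  subsets of the primes of \<open>k\<close> not dividing \<open>n\<close> show that this count is at least
  \<open>2\<^bsup>\<omega>(k) - \<omega>(n)\<^esup>\<close>.
\<close>

definition additive_char :: "nat \<Rightarrow> nat \<Rightarrow> nat \<Rightarrow> complex" where
  "additive_char N m h = exp (2 * of_real pi * \<i> * of_nat m * of_nat h / of_nat N)"

lemma additive_char_eq_power:
  "additive_char N m h = exp (2 * of_real pi * \<i> * of_nat m / of_nat N) ^ h"
  by (simp add: additive_char_def flip: exp_of_nat_mult) (simp add: field_simps)

lemma additive_char_mult_cancel: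
  assumes "d > 0"
  shows "additive_char (d * N) m (d * h) = additive_char N m h"
  using assms by (simp add: additive_char_def field_simps)

lemma additive_char_1: "additive_char 1 m h = 1"
  using complex_root_unity_eq_1[of 1 "m * h"] by (simp add: additive_char_def mult.assoc)

lemma sum_additive_char_eq_0:
  assumes "N > 0" "\<not> N dvd m"
  shows "(\<Sum>h\<in>{1..N}. additive_char N m h) = 0"
proof -
  define z where "z = exp (2 * of_real pi * \<i> * of_nat m / of_nat N)"
  have "z \<noteq> 1" "z ^ N = 1"
    using assms complex_root_unity_eq_1[of N m] complex_root_unity[of N m] by (simp_all add: z_def)
  moreover have "(1 - z) * (\<Sum>h\<in>{1..N}. z ^ h) = z ^ 1 - z ^ Suc N"
    using assms(1) by (intro sum_gp_multiplied) simp
  ultimately show ?thesis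
    by (simp add: additive_char_eq_power flip: z_def)
qed

definition sieved_char_sum :: "nat set \<Rightarrow> nat \<Rightarrow> nat \<Rightarrow> complex" where
  "sieved_char_sum D N m = (\<Sum>h\<in>{h\<in>{1..N}. \<forall>d\<in>D. \<not> d dvd h}. additive_char N m h)"

lemma sieved_char_sum_empty: "sieved_char_sum {} N m = (\<Sum>h\<in>{1..N}. additive_char N m h)"
  unfolding sieved_char_sum_def by (intro sum.cong) auto

lemma sieved_char_sum_insert:
  assumes "d > 0" "d dvd N" "\<forall>e\<in>D. coprime e d"
  shows "sieved_char_sum (insert d D) N m = sieved_char_sum D N m - sieved_char_sum D (N div d) m"
proof -
  obtain K where N: "N = d * K" using assms(2) by blast
  define A where "A = {h\<in>{1..N}. \<forall>e\<in>D. \<not> e dvd h}"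
  define A' where "A' = {j\<in>{1..K}. \<forall>e\<in>D. \<not> e dvd j}"
  have sieve_mult: "(\<forall>e\<in>D. \<not> e dvd d * j) \<longleftrightarrow> (\<forall>e\<in>D. \<not> e dvd j)" for j
    using assms(3) by (simp add: coprime_dvd_mult_right_iff)
  have "{h\<in>A. d dvd h} = (*) d ` A'"
  proof (intro equalityI subsetI)
    fix h assume "h \<in> {h\<in>A. d dvd h}"
    then obtain j where "h = d * j" "h \<in> A" by auto
    then show "h \<in> (*) d ` A'"
      using assms(1) sieve_mult[of j] by (auto simp: A_def A'_def N intro!: image_eqI[of _ _ j])
  qed (use assms(1) sieve_mult in \<open>auto simp: A_def A'_def N\<close>)
  moreover have "inj_on ((*) d) A'" using assms(1) by (auto intro: inj_onI)
  ultimately have "(\<Sum>h\<in>{h\<in>A. d dvd h}. additive_char N m h) = (\<Sum>j\<in>A'. additive_char K m j)"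
    using assms(1) by (simp add: sum.reindex N additive_char_mult_cancel)
  also have "\<dots> = sieved_char_sum D K m"
    unfolding sieved_char_sum_def A'_def ..
  finally have reindexed: "(\<Sum>h\<in>{h\<in>A. d dvd h}. additive_char N m h) = sieved_char_sum D K m" .
  have "sieved_char_sum (insert d D) N m = (\<Sum>h\<in>A - {h\<in>A. d dvd h}. additive_char N m h)"
    unfolding sieved_char_sum_def by (rule sum.cong) (auto simp: A_def)
  also have "\<dots> = (\<Sum>h\<in>A. additive_char N m h) - (\<Sum>h\<in>{h\<in>A. d dvd h}. additive_char N m h)"
    by (rule sum_diff) (auto simp: A_def)
  also have "(\<Sum>h\<in>A. additive_char N m h) = sieved_char_sum D N m"
    unfolding sieved_char_sum_def A_def ..
  finally show ?thesis
    using reindexed assms(1) by (simp add: N)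
qed

lemma sieved_char_sum_eq:
  assumes "finite D" "pairwise coprime D" "0 \<notin> D" "\<forall>d\<in>D. \<not> d dvd m" "\<Prod>D dvd N" "N > 0"
  shows "sieved_char_sum D N m = (-1) ^ card D * sieved_char_sum {} (N div \<Prod>D) m"
  using assms(2-)
proof (induction arbitrary: N rule: finite_induct[OF assms(1)])
  case (2 d D)
  have "d * \<Prod>D dvd N"
    using "2.prems"(4) "2.hyps" by simp
  then obtain c where c: "N = d * \<Prod>D * c" ..
  have pos: "d > 0" "\<Prod>D > 0" "c > 0"
    using "2.prems"(2,5) c by (auto simp: prod_pos)
  have coprime: "\<forall>e\<in>D. coprime e d"
    using "2.prems"(1) "2.hyps"(2) by (auto simp: pairwise_insert)
  have "sieved_char_sum {} (N div \<Prod>D) m = 0"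
  proof -
    have "\<not> d * c dvd m" using "2.prems"(3) by (auto dest: dvd_mult_left)
    then show ?thesis
      using pos c sum_additive_char_eq_0[of "d * c" m] by (simp add: sieved_char_sum_empty)
  qed
  moreover have "sieved_char_sum D N m = (-1) ^ card D * sieved_char_sum {} (N div \<Prod>D) m"
    using "2.prems" c pos by (intro "2.IH") (auto simp: pairwise_insert)
  moreover have "sieved_char_sum D (N div d) m = (-1) ^ card D * sieved_char_sum {} (N div d div \<Prod>D) m"
    using "2.prems" c pos by (intro "2.IH") (auto simp: pairwise_insert)
  ultimately show ?case
    using pos c "2.hyps" sieved_char_sum_insert[OF pos(1) _ coprime, of N m]
    by (simp add: div_mult2_eq)
qed simp

lemma gen_gcd_eq_1_iff:
  assumes "q > 0" "s > 0"
  shows "gen_gcd s h (q ^ s) = 1 \<longleftrightarrow> (\<forall>p\<in>prime_factors q. \<not> p ^ s dvd h)"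
proof -
  define S where "S = (\<lambda>e. \<exists>d. e = d ^ s \<and> d ^ s dvd h \<and> d ^ s dvd q ^ s)"
  have S_bounded: "\<forall>e. S e \<longrightarrow> e \<le> q ^ s"
    using assms(1) by (auto simp: S_def intro: dvd_imp_le)
  have "gen_gcd s h (q ^ s) = 1 \<longleftrightarrow> (\<forall>e. S e \<longrightarrow> e \<le> 1)"
  proof
    assume "gen_gcd s h (q ^ s) = 1"
    then show "\<forall>e. S e \<longrightarrow> e \<le> 1"
      using Greatest_le_nat[of S _ "q ^ s"] S_bounded by (auto simp: gen_gcd_def S_def)
  next
    assume "\<forall>e. S e \<longrightarrow> e \<le> 1"
    moreover have "S 1" unfolding S_def by (intro exI[of _ 1]) simp
    ultimately show "gen_gcd s h (q ^ s) = 1"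
      unfolding gen_gcd_def S_def[symmetric] by (intro Greatest_equality) auto
  qed
  also have "\<dots> \<longleftrightarrow> (\<forall>d. d dvd q \<longrightarrow> d ^ s dvd h \<longrightarrow> d \<le> 1)"
  proof -
    have "d ^ s \<le> 1 \<longleftrightarrow> d \<le> 1" for d :: nat
      using assms(2) power_le_one_iff[of d s] by simp
    then show ?thesis
      using assms(2) by (auto simp: S_def)
  qed
  also have "\<dots> \<longleftrightarrow> (\<forall>p\<in>prime_factors q. \<not> p ^ s dvd h)"
  proof (intro iffI ballI allI impI)
    fix p assume "\<forall>d. d dvd q \<longrightarrow> d ^ s dvd h \<longrightarrow> d \<le> 1" "p \<in> prime_factors q"
    moreover have "p > 1" "p dvd q"
      using \<open>p \<in> prime_factors q\<close> by (meson in_prime_factors_iff prime_gt_1_nat)+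
    ultimately show "\<not> p ^ s dvd h"
      by (metis leD)
  next
    fix d assume no_power: "\<forall>p\<in>prime_factors q. \<not> p ^ s dvd h" and "d dvd q" "d ^ s dvd h"
    show "d \<le> 1"
    proof (rule ccontr)
      assume "\<not> d \<le> 1"
      then obtain p where "prime p" "p dvd d"
        using prime_factor_nat[of d] by auto
      moreover have "p dvd q"
        using \<open>p dvd d\<close> \<open>d dvd q\<close> by (rule dvd_trans)
      moreover have "p ^ s dvd h"
        using \<open>p dvd d\<close> \<open>d ^ s dvd h\<close> by (meson dvd_power_same dvd_trans)
      ultimately have "p \<in> prime_factors q" "p ^ s dvd h"
        using assms(1) by (auto simp: in_prime_factors_iff)
      then show False using no_power by blast
    qed
  qed
  finally show ?thesis .
qed

lemma squarefree_prod_prime_factors: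
  fixes q :: nat
  assumes "squarefree q"
  shows "\<Prod>(prime_factors q) = q"
proof -
  have "q \<noteq> 0" using assms by (metis not_squarefree_0)
  then have "\<forall>p\<in>prime_factors q. multiplicity p q = 1"
    using assms squarefree_factorial_semiring' by blast
  then have "\<Prod>(prime_factors q) = (\<Prod>p\<in>prime_factors q. p ^ multiplicity p q)"
    by simp
  also have "\<dots> = q"
    using \<open>q \<noteq> 0\<close> by (simp add: prod_prime_factors)
  finally show ?thesis .
qed

lemma cohen_ramanujan_squarefree_coprime:
  assumes "squarefree q" "coprime q n" "s > 0"
  shows "cohen_ramanujan s q (n ^ s) = of_int (moebius q)"
proof -
  let ?P = "prime_factors q"
  define D where "D = (\<lambda>p. p ^ s) ` ?P"
  have "q > 0" using assms(1) by (cases "q = 0") auto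
  have inj: "inj_on (\<lambda>p. p ^ s) ?P"
    using assms(3) by (auto intro!: inj_onI dest: power_eq_imp_eq_base)
  have cohen_sieved: "cohen_ramanujan s q (n ^ s) = sieved_char_sum D (q ^ s) (n ^ s)"
    unfolding cohen_ramanujan_def sieved_char_sum_def additive_char_def D_def
    using gen_gcd_eq_1_iff[OF \<open>q > 0\<close> assms(3)] by (intro sum.cong) auto
  have prod_D: "\<Prod>D = q ^ s"
    using inj squarefree_prod_prime_factors[OF assms(1)]
    by (simp add: D_def prod.reindex flip: prod_power_distrib)
  have "pairwise coprime D"
    by (auto simp: D_def pairwise_def intro!: primes_coprime)
  moreover have "\<forall>d\<in>D. \<not> d dvd n ^ s"
  proof
    fix d assume "d \<in> D"
    then obtain p where p: "p \<in> ?P" "d = p ^ s" by (auto simp: D_def)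
    then have "\<not> p dvd n"
      using assms(2) by (meson coprime_common_divisor in_prime_factors_iff not_prime_unit)
    then show "\<not> d dvd n ^ s"
      using p assms(3) by simp
  qed
  moreover have "0 \<notin> D" by (auto simp: D_def)
  ultimately have "sieved_char_sum D (q ^ s) (n ^ s) = (-1) ^ card D * sieved_char_sum {} 1 (n ^ s)"
    using \<open>q > 0\<close> prod_D sieved_char_sum_eq[where N = "q ^ s" and m = "n ^ s"] by (simp add: D_def)
  moreover have "sieved_char_sum {} 1 (n ^ s) = 1"
    using additive_char_1[of "n ^ s" 1] by (simp add: sieved_char_sum_empty)
  ultimately show ?thesis
    using cohen_sieved inj assms(1) by (simp add: moebius_def D_def card_image)
qed

lemma prime_factors_prod_primes:
  fixes P :: "nat set"
  assumes "finite P" "\<forall>p\<in>P. prime p"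
  shows "prime_factors (\<Prod>P) = P"
proof -
  have "0 \<notin> P" using assms(2) by auto
  then have "prime_factors (\<Prod>P) = (\<Union>p\<in>P. prime_factors p)"
    using prime_factors_prod[OF assms(1), of "\<lambda>p. p"] by simp
  also have "\<dots> = P"
    using assms(2) by (simp add: prime_prime_factors)
  finally show ?thesis .
qed

lemma inj_on_prod_primes:
  fixes P :: "nat set"
  assumes "finite P" "\<forall>p\<in>P. prime p"
  shows "inj_on Prod (Pow P)"
proof (rule inj_onI)
  fix D1 D2 assume "D1 \<in> Pow P" "D2 \<in> Pow P" "\<Prod>D1 = \<Prod>D2"
  then show "D1 = D2"
    using assms prime_factors_prod_primes[of D1] prime_factors_prod_primes[of D2]
    by (metis PowD finite_subset subset_iff)
qed

lemma squarefree_prod_primes: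
  fixes P :: "nat set"
  assumes "\<forall>p\<in>P. prime p"
  shows "squarefree (\<Prod>P)"
  using assms by (intro squarefree_prod_coprime) (auto intro: primes_coprime squarefree_prime)

lemma prod_prime_factors_dvd:
  fixes k :: nat
  shows "\<Prod>(prime_factors k) dvd k"
proof (cases "k = 0")
  case False
  have "\<Prod>(prime_factors k) dvd (\<Prod>p\<in>prime_factors k. p ^ multiplicity p k)"
    by (intro prod_dvd_prod) (simp add: prime_factors_multiplicity)
  then show ?thesis
    using False by (simp add: prod_prime_factors)
qed simp

lemma two_pow_omega_le:
  fixes k n :: nat
  assumes "k > 0" "n > 0"
  shows "2 ^ omega k \<le> 2 ^ omega n * card {q. q dvd k \<and> squarefree q \<and> coprime q n}"
proof -
  define X where "X = prime_factors k - prime_factors n"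
  define B where "B = {q. q dvd k \<and> squarefree q \<and> coprime q n}"
  have X_primes: "\<forall>p\<in>X. prime p" by (auto simp: X_def)
  have "Prod ` Pow X \<subseteq> B"
  proof
    fix q assume "q \<in> Prod ` Pow X"
    then obtain D where D: "D \<subseteq> X" "q = \<Prod>D" by blast
    have "\<Prod>D dvd \<Prod>(prime_factors k)"
      using D(1) by (intro prod_dvd_prod_subset) (auto simp: X_def)
    then have "\<Prod>D dvd k"
      using prod_prime_factors_dvd by (rule dvd_trans)
    moreover have "squarefree (\<Prod>D)"
      using D(1) X_primes by (intro squarefree_prod_primes) auto
    moreover have "coprime (\<Prod>D) n"
    proof (rule prod_coprime_left)
      fix p assume "p \<in> D"
      then have "prime p" "\<not> p dvd n"
        using D(1) assms(2) by (auto simp: X_def in_prime_factors_iff)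
      then show "coprime p n" by (rule prime_imp_coprime)
    qed
    ultimately show "q \<in> B" by (simp add: B_def D(2))
  qed
  moreover have "finite B"
    using assms(1) by (auto simp: B_def intro: finite_subset[OF _ finite_divisors_nat])
  ultimately have card_B: "2 ^ card X \<le> card B"
    using card_inj_on_le[OF inj_on_prod_primes[OF _ X_primes]] by (simp add: X_def card_Pow)
  have "omega k \<le> card X + omega n"
  proof -
    have "prime_factors k \<subseteq> X \<union> prime_factors n" by (auto simp: X_def)
    then have "omega k \<le> card (X \<union> prime_factors n)"
      unfolding omega_def by (intro card_mono) (auto simp: X_def)
    also have "\<dots> \<le> card X + omega n"
      unfolding omega_def by (rule card_Un_le)
    finally show ?thesis .
  qed
  then have "(2::nat) ^ omega k \<le> 2 ^ card X * 2 ^ omega n"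
    by (simp flip: power_add)
  also have "\<dots> \<le> card B * 2 ^ omega n"
    using card_B by (rule mult_right_mono) simp
  finally show ?thesis
    by (simp add: B_def mult.commute)
qed

lemma summable_on_divisor_count_mult:
  fixes a :: "nat \<Rightarrow> real"
  assumes "Q \<subseteq> {1..}" "(\<lambda>(q, m). a (m * q)) summable_on Q \<times> {1..}"
  shows "(\<lambda>k. real (card {q\<in>Q. q dvd k}) * a k) summable_on {1..}"
proof -
  define B where "B k = {q\<in>Q. q dvd k}" for k
  have "(\<lambda>(q, m). a (m * q)) summable_on Q \<times> {1..} \<longleftrightarrow> (\<lambda>(k, q). a k) summable_on Sigma {1..} B"
  proof (rule summable_on_reindex_bij_witness
      [where i = "\<lambda>(k, q). (q, k div q)" and j = "\<lambda>(q, m). (m * q, q)"])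
    fix y assume "y \<in> Sigma {1..} B"
    then obtain k q where "y = (k, q)" "k \<ge> 1" "q \<in> Q" "q dvd k"
      by (auto simp: B_def)
    then show "(\<lambda>(q, m). (m * q, q)) ((\<lambda>(k, q). (q, k div q)) y) = y"
      "(\<lambda>(k, q). (q, k div q)) y \<in> Q \<times> {1..}"
      using assms(1) by (auto simp: Suc_le_eq)
  qed (use assms(1) in \<open>auto simp: B_def\<close>)
  with assms(2) have "(\<lambda>(k, q). a k) summable_on Sigma {1..} B" by simp
  moreover have finite_B: "finite (B k)" if "k \<ge> 1" for k
    using that by (auto simp: B_def intro: finite_subset[OF _ finite_divisors_nat])
  ultimately have "(\<lambda>k. \<Sum>\<^sub>\<infinity>q\<in>B k. a k) summable_on {1..}"
    using summable_on_SigmaD[of "\<lambda>(k, q). a k" "{1..}" B] by simp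
  moreover have "(\<Sum>\<^sub>\<infinity>q\<in>B k. a k) = real (card {q\<in>Q. q dvd k}) * a k" if "k \<in> {1..}" for k
    using that finite_B by (simp add: B_def)
  ultimately show ?thesis
    by (rule summable_on_cong[THEN iffD1, rotated])
qed

theorem theorem5:
  fixes s n :: nat and f :: "nat \<Rightarrow> complex"
  assumes "s > 0" and "n > 0"
    and "\<forall>q\<in>{1..}. (\<lambda>m. norm (fprime f (m * q)) / real (m * q) ^ s
                         * norm (cohen_ramanujan s q (n ^ s))) summable_on {1..}"
    and "(\<lambda>q. \<Sum>\<^sub>\<infinity>m\<in>{1..}. norm (fprime f (m * q)) / real (m * q) ^ s
                         * norm (cohen_ramanujan s q (n ^ s))) summable_on {1..}"
  shows "(\<lambda>k. 2 ^ omega k * norm (fprime f k) / real k ^ s) summable_on {1..}"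
proof -
  define a where "a k = norm (fprime f k) / real k ^ s" for k
  define Q where "Q = {q. squarefree q \<and> coprime q n}"
  have Q_pos: "Q \<subseteq> {1..}"
    by (auto simp: Q_def Suc_le_eq) (metis gr0I not_squarefree_0)
  have "(\<lambda>(q, m). a (m * q) * norm (cohen_ramanujan s q (n ^ s))) summable_on {1..} \<times> {1..}"
    using assms(3) by (intro summable_on_SigmaI[OF _ assms(4)]) (auto simp: a_def)
  then have "(\<lambda>(q, m). a (m * q) * norm (cohen_ramanujan s q (n ^ s))) summable_on Q \<times> {1..}"
    by (rule summable_on_subset_banach) (use Q_pos in auto)
  moreover have "norm (cohen_ramanujan s q (n ^ s)) = 1" if "q \<in> Q" for q
    using that assms(1) by (simp add: Q_def cohen_ramanujan_squarefree_coprime moebius_def norm_power)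
  ultimately have "(\<lambda>(q, m). a (m * q)) summable_on Q \<times> {1..}"
    by (auto intro: summable_on_cong[THEN iffD1, rotated])
  then have "(\<lambda>k. 2 ^ omega n * (real (card {q\<in>Q. q dvd k}) * a k)) summable_on {1..}"
    by (intro summable_on_cmult_right summable_on_divisor_count_mult Q_pos)
  then show ?thesis
  proof (rule summable_on_comparison_test)
    fix k :: nat assume "k \<in> {1..}"
    then have "2 ^ omega k \<le> 2 ^ omega n * card {q\<in>Q. q dvd k}"
      using two_pow_omega_le[of k n] assms(2) by (simp add: Q_def conj_commute)
    then have "real (2 ^ omega k) \<le> real (2 ^ omega n * card {q\<in>Q. q dvd k})"
      by (rule of_nat_mono)
    then show "2 ^ omega k * norm (fprime f k) / real k ^ s
               \<le> 2 ^ omega n * (real (card {q\<in>Q. q dvd k}) * a k)"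
      by (simp add: a_def divide_right_mono mult_right_mono flip: mult.assoc)
  qed simp
qed

end
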